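(* Let $G$ be an $n\times n$ positive semidefinite matrix and $\beta\in(0,1]$. Then there is a subspace $W\subseteq\mathbb{R}^n$ with $\dim(W)\ge(1-\beta)n$ such that $w^TGw\le\frac1\beta w^T\mathrm{diag}(G)w$ for all $w\in W$.
   Context: $\mathrm{diag}(G)$ denotes the diagonal matrix with the same diagonal entries as $G$. *)

theory Defs
  imports "HOL-Analysis.Analysis"
begin

definition psd_matrix :: "real^'n^'n \<Rightarrow> bool" where
  "psd_matrix G \<longleftrightarrow> transpose G = G \<and> (\<forall>x. 0 \<le> x \<bullet> (G *v x))"

definition diag_mat :: "real^'n^'n \<Rightarrow> real^'n^'n" where
  "diag_mat G = (\<chi> i j. if i = j then G $ i $ j else 0)"

end

theory Submission
  imports Defs
begin

(* Let K = G - (1/\<beta>) diag(G) and take a subspace V of maximal dimension on which the quadratic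
   form of K is positive definite. By maximality the form of K is nonpositive on W = (K V)\<^sup>\<bottom>,
   and dim W \<ge> n - dim V. To bound dim V, rescale by diag(G)\<^sup>-\<^sup>1\<^sup>/\<^sup>2: the rescaled matrix H
   is positive semidefinite with diagonal entries at most 1, and its form exceeds (1/\<beta>) |u|\<^sup>2 on
   the image of V. Summing the form of H over an orthonormal basis of that image, extended to
   one of the whole space, gives dim V / \<beta> \<le> trace H \<le> n. *)

lemma inner_matrix_vector_mult_sum:
  "x \<bullet> (A *v y) = (\<Sum>i\<in>UNIV. \<Sum>j\<in>UNIV. x$i * A$i$j * y$j)"
  by (simp add: inner_vec_def matrix_vector_mult_def sum_distrib_left mult.assoc)

lemma inner_transpose_matrix_vector_mult:
  fixes A :: "real^'n^'m"
  shows "x \<bullet> (transpose A *v y) = y \<bullet> (A *v x)"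
  by (metis dot_lmul_matrix inner_commute transpose_matrix_vector)

lemma axis_inner_matrix_vector_mult_axis: "axis i 1 \<bullet> (A *v axis j (1::real)) = A$i$j"
proof -
  have "(A *v axis j (1::real))$i = A$i$j"
    by (simp add: matrix_vector_mult_def axis_def if_distrib[of "\<lambda>x. a * x" for a] cong: if_cong)
  then show ?thesis by (simp add: inner_axis')
qed

lemma psd_matrix_symmetric: "psd_matrix G \<Longrightarrow> G$j$i = G$i$j"
  unfolding psd_matrix_def by (metis transpose_def vec_lambda_beta)

lemma psd_matrix_diag_nonneg: "psd_matrix G \<Longrightarrow> 0 \<le> G$i$i"
  by (metis axis_inner_matrix_vector_mult_axis psd_matrix_def)

lemma psd_matrix_zero_diag:
  assumes "psd_matrix G" "G$i$i = 0"
  shows "G$i$j = 0"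
proof (cases "i = j")
  case True
  then show ?thesis using assms by simp
next
  case False
  have quad: "(t *\<^sub>R axis i 1 + axis j 1) \<bullet> (G *v (t *\<^sub>R axis i 1 + axis j (1::real)))
      = t*t*G$i$i + t*G$i$j + t*G$j$i + G$j$j" for t
    by (simp add: matrix_vector_right_distrib inner_add_left inner_add_right algebra_simps
        axis_inner_matrix_vector_mult_axis scaleR_matrix_vector_assoc[symmetric])
  have nonneg: "0 \<le> (t *\<^sub>R axis i 1 + axis j 1) \<bullet> (G *v (t *\<^sub>R axis i 1 + axis j (1::real)))" for t
    using assms(1) by (simp add: psd_matrix_def)
  have "0 \<le> 2*t*G$i$j + G$j$j" for t
    using nonneg[of t] quad[of t] psd_matrix_symmetric[OF assms(1)] assms(2) by simp
  from this[of "- (G$j$j + 1) / (2 * G$i$j)"] this[of "(G$j$j + 1) / (2 * G$i$j)"]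
  show ?thesis by (cases "G$i$j = 0") (auto simp: field_simps)
qed

lemma sum_orthonormal_basis_quadratic_form_eq_trace:
  fixes E :: "(real^'n) set"
  assumes "pairwise orthogonal E" "\<And>b. b \<in> E \<Longrightarrow> norm b = 1" "span E = UNIV"
  shows "(\<Sum>b\<in>E. b \<bullet> (A *v b)) = trace A"
proof -
  have fin: "finite E" using assms(1) pairwise_orthogonal_imp_finite by blast
  have delta: "(\<Sum>b\<in>E. b$i * b$l) = (if i = l then 1 else 0)" for i l
  proof -
    have "(\<Sum>b\<in>E. (axis l 1 \<bullet> b) *\<^sub>R b) = axis l (1::real)"
      using orthonormal_basis_expand[OF assms(1,2)] fin assms(3) by auto
    then have "(\<Sum>b\<in>E. (axis l 1 \<bullet> b) *\<^sub>R b) $ i = axis l (1::real) $ i" by simp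
    then have "(\<Sum>b\<in>E. b$l * b$i) = axis l (1::real) $ i"
      by (simp add: sum_component inner_axis')
    then show ?thesis by (simp add: axis_def mult.commute)
  qed
  have "(\<Sum>b\<in>E. b \<bullet> (A *v b)) = (\<Sum>i\<in>UNIV. \<Sum>j\<in>UNIV. \<Sum>b\<in>E. b$i * A$i$j * b$j)"
    by (simp add: inner_matrix_vector_mult_sum sum.swap[of _ E])
  also have "\<dots> = (\<Sum>i\<in>UNIV. \<Sum>j\<in>UNIV. A$i$j * (\<Sum>b\<in>E. b$i * b$j))"
    by (simp add: sum_distrib_left mult.assoc mult.left_commute)
  also have "\<dots> = trace A"
    by (simp add: delta trace_def if_distrib[of "\<lambda>x. a * x" for a] cong: if_cong)
  finally show ?thesis .
qed

lemma orthonormal_basis_extend: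
  fixes B :: "'a::euclidean_space set"
  assumes "pairwise orthogonal B" "\<And>b. b \<in> B \<Longrightarrow> norm b = 1"
  obtains C where "B \<inter> C = {}" "pairwise orthogonal (B \<union> C)" "\<And>c. c \<in> C \<Longrightarrow> norm c = 1"
    "span (B \<union> C) = UNIV"
proof -
  obtain C where C: "C \<subseteq> orthogonal_comp (span B)" "pairwise orthogonal C"
      "\<And>c. c \<in> C \<Longrightarrow> norm c = 1" "span C = orthogonal_comp (span B)"
    using orthonormal_basis_subspace[OF subspace_orthogonal_comp] by metis
  have BC: "b \<bullet> c = 0" if "b \<in> B" "c \<in> C" for b c
    using that C(1) span_base unfolding orthogonal_comp_def orthogonal_def by fastforce
  show thesis
  proof
    show "B \<inter> C = {}"
      using BC C(3) by (metis disjoint_iff inner_eq_zero_iff norm_zero zero_neq_one)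
    show "pairwise orthogonal (B \<union> C)"
      using assms(1) C(2) BC unfolding pairwise_def orthogonal_def by (metis UnE inner_commute)
    have "x \<in> span (B \<union> C)" for x
    proof -
      obtain a c where "a \<in> span B" "c \<in> orthogonal_comp (span B)" "x = a + c"
        using subspace_sum_orthogonal_comp[OF subspace_span, of B] by (metis UNIV_I set_plus_elim)
      then show ?thesis
        using C(4) span_mono[of B "B \<union> C"] span_mono[of C "B \<union> C"] by (auto intro: span_add)
    qed
    then show "span (B \<union> C) = UNIV" by auto
  qed (use C(3) in auto)
qed

lemma dim_subspace_le_trace:
  fixes H :: "real^'n^'n"
  assumes "\<And>x. 0 \<le> x \<bullet> (H *v x)" "subspace U" "\<And>u. u \<in> U \<Longrightarrow> c * (u \<bullet> u) \<le> u \<bullet> (H *v u)"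
  shows "c * real (dim U) \<le> trace H"
proof -
  obtain B where B: "B \<subseteq> U" "pairwise orthogonal B" "\<And>b. b \<in> B \<Longrightarrow> norm b = 1" "card B = dim U"
    using orthonormal_basis_subspace[OF assms(2)] by metis
  obtain C where C: "B \<inter> C = {}" "pairwise orthogonal (B \<union> C)" "\<And>c. c \<in> C \<Longrightarrow> norm c = 1"
      "span (B \<union> C) = UNIV"
    using orthonormal_basis_extend[OF B(2,3)] by metis
  have fin: "finite (B \<union> C)" using C(2) pairwise_orthogonal_imp_finite by blast
  have "c * real (dim U) = (\<Sum>b\<in>B. c * (b \<bullet> b))"
    using B(3,4) by (simp add: norm_eq_1)
  also have "\<dots> \<le> (\<Sum>b\<in>B. b \<bullet> (H *v b))"
    using B(1) assms(3) by (auto intro: sum_mono)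
  also have "\<dots> \<le> (\<Sum>b\<in>B. b \<bullet> (H *v b)) + (\<Sum>b\<in>C. b \<bullet> (H *v b))"
    using assms(1) by (simp add: sum_nonneg)
  also have "\<dots> = (\<Sum>b\<in>B \<union> C. b \<bullet> (H *v b))"
    using fin C(1) by (simp add: sum.union_disjoint)
  also have "\<dots> = trace H"
    by (rule sum_orthonormal_basis_quadratic_form_eq_trace) (use B(3) C in auto)
  finally show ?thesis .
qed

definition positive_definite_on :: "real^'n^'n \<Rightarrow> (real^'n) set \<Rightarrow> bool" where
  "positive_definite_on K V \<longleftrightarrow> subspace V \<and> (\<forall>v\<in>V. v \<noteq> 0 \<longrightarrow> 0 < v \<bullet> (K *v v))"

lemma ex_maximal_positive_definite_subspace:
  fixes K :: "real^'n^'n"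
  obtains V where "positive_definite_on K V" "\<And>V'. positive_definite_on K V' \<Longrightarrow> dim V' \<le> dim V"
proof -
  have zero: "positive_definite_on K {0}"
    by (simp add: positive_definite_on_def)
  have "\<exists>d. (\<exists>V. positive_definite_on K V \<and> dim V = d) \<and>
      (\<forall>d'. (\<exists>V. positive_definite_on K V \<and> dim V = d') \<longrightarrow> d' \<le> d)"
    by (rule Nat.ex_has_greatest_nat[of _ "dim {0::real^'n}" "CARD('n)"])
      (use zero dim_subset_UNIV_cart[where 'n='n] in blast)+
  then show thesis using that by blast
qed

lemma positive_definite_on_span_insert:
  fixes K :: "real^'n^'n"
  assumes sym: "transpose K = K"
    and pos: "positive_definite_on K V"
    and w_pos: "0 < w \<bullet> (K *v w)"
    and orth: "\<And>v. v \<in> V \<Longrightarrow> v \<bullet> (K *v w) = 0"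
  shows "positive_definite_on K (span (insert w V))"
  unfolding positive_definite_on_def
proof (intro conjI ballI impI)
  fix x assume "x \<in> span (insert w V)" "x \<noteq> 0"
  moreover have V: "subspace V" using pos by (simp add: positive_definite_on_def)
  ultimately obtain k where "x - k *\<^sub>R w \<in> V"
    using span_breakdown_eq span_eq_iff by metis
  then obtain v where v: "v \<in> V" and x: "x = v + k *\<^sub>R w"
    by (metis diff_add_cancel)
  have "w \<bullet> (K *v v) = 0"
    using orth[OF v] sym inner_transpose_matrix_vector_mult[of v K w] by simp
  then have "x \<bullet> (K *v x) = v \<bullet> (K *v v) + k * k * (w \<bullet> (K *v w))"
    unfolding x using orth[OF v]
    by (simp add: matrix_vector_right_distrib matrix_vector_mult_scaleR inner_add_left inner_add_right)
  moreover have "0 \<le> k * k * (w \<bullet> (K *v w))"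
    using w_pos by simp
  moreover have "0 < v \<bullet> (K *v v) \<or> 0 < k * k * (w \<bullet> (K *v w))"
  proof (cases "v = 0")
    case True
    then have "k \<noteq> 0" using \<open>x \<noteq> 0\<close> x by auto
    then show ?thesis using w_pos by (auto simp: zero_less_mult_iff linorder_neq_iff)
  next
    case False
    then show ?thesis using pos v by (simp add: positive_definite_on_def)
  qed
  moreover have "0 \<le> v \<bullet> (K *v v)"
    using pos v by (cases "v = 0") (auto simp: positive_definite_on_def less_imp_le)
  ultimately show "0 < x \<bullet> (K *v x)" by linarith
qed simp

lemma maximal_positive_definite_subspace_orthogonal_nonpos:
  fixes K :: "real^'n^'n"
  assumes sym: "transpose K = K"
    and pos: "positive_definite_on K V"
    and max: "\<And>V'. positive_definite_on K V' \<Longrightarrow> dim V' \<le> dim V"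
    and w: "w \<in> orthogonal_comp ((*v) K ` V)"
  shows "w \<bullet> (K *v w) \<le> 0"
proof (rule ccontr)
  assume "\<not> w \<bullet> (K *v w) \<le> 0"
  then have w_pos: "0 < w \<bullet> (K *v w)" by simp
  have orth: "v \<bullet> (K *v w) = 0" if "v \<in> V" for v
    using w that sym inner_transpose_matrix_vector_mult[of v K w]
    unfolding orthogonal_comp_def orthogonal_def by (auto simp: inner_commute)
  have "w \<notin> V" using orth w_pos by force
  moreover have V: "subspace V" using pos by (simp add: positive_definite_on_def)
  ultimately have "dim (span (insert w V)) = dim V + 1"
    by (metis dim_insert dim_span span_eq_iff)
  then show False
    using max[OF positive_definite_on_span_insert[OF sym pos w_pos orth]] by simp
qed

lemma symmetric_matrix_nonpos_subspace:
  fixes K :: "real^'n^'n"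
  assumes "transpose K = K"
  obtains V W where "positive_definite_on K V" "subspace W" "CARD('n) \<le> dim V + dim W"
    "\<And>w. w \<in> W \<Longrightarrow> w \<bullet> (K *v w) \<le> 0"
proof -
  obtain V where pos: "positive_definite_on K V"
    and max: "\<And>V'. positive_definite_on K V' \<Longrightarrow> dim V' \<le> dim V"
    using ex_maximal_positive_definite_subspace by blast
  define W where "W = orthogonal_comp ((*v) K ` V)"
  have KV: "subspace ((*v) K ` V)"
    using pos linear_subspace_image[OF matrix_vector_mul_linear]
    by (auto simp: positive_definite_on_def)
  have "dim W + dim ((*v) K ` V) = CARD('n)"
    using dim_subspace_orthogonal_to_vectors[OF KV subspace_UNIV subset_UNIV]
    by (simp add: W_def orthogonal_comp_def)
  moreover have "dim ((*v) K ` V) \<le> dim V"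
    by (rule dim_image_le[OF matrix_vector_mul_linear])
  ultimately have "CARD('n) \<le> dim V + dim W" by linarith
  then show thesis
    using that pos subspace_orthogonal_comp
      maximal_positive_definite_subspace_orthogonal_nonpos[OF assms pos max]
    unfolding W_def by blast
qed

definition diag_sqrt_scale :: "real^'n^'n \<Rightarrow> real^'n \<Rightarrow> real^'n" where
  "diag_sqrt_scale G y = (\<chi> i. sqrt (G$i$i) * y$i)"

text \<open>\<open>diag(G)\<^sup>-\<^sup>1\<^sup>/\<^sup>2 G diag(G)\<^sup>-\<^sup>1\<^sup>/\<^sup>2\<close>, where \<open>x / 0 = 0\<close> puts zeros in the rows and columns of
  vanishing diagonal entries; for positive semidefinite \<open>G\<close> these rows and columns vanish anyway.\<close>
definition diag_normalize :: "real^'n^'n \<Rightarrow> real^'n^'n" where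
  "diag_normalize G = (\<chi> i j. G$i$j / (sqrt (G$i$i) * sqrt (G$j$j)))"

lemma linear_diag_sqrt_scale: "linear (diag_sqrt_scale G)"
  by (rule linearI) (simp_all add: diag_sqrt_scale_def vec_eq_iff algebra_simps)

lemma inner_diag_mat_eq_diag_sqrt_scale:
  assumes "psd_matrix G"
  shows "y \<bullet> (diag_mat G *v y) = diag_sqrt_scale G y \<bullet> diag_sqrt_scale G y"
proof -
  have "y \<bullet> (diag_mat G *v y) = (\<Sum>i\<in>UNIV. G$i$i * (y$i * y$i))"
    by (simp add: inner_matrix_vector_mult_sum diag_mat_def if_distrib[of "\<lambda>z. a * z" for a]
        if_distrib[of "\<lambda>z. z * a" for a] mult.commute mult.left_commute cong: if_cong)
  also have "\<dots> = diag_sqrt_scale G y \<bullet> diag_sqrt_scale G y"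
    unfolding inner_vec_def diag_sqrt_scale_def vec_lambda_beta
    using psd_matrix_diag_nonneg[OF assms]
    by (intro sum.cong refl) (simp add: power2_eq_square[symmetric] power_mult_distrib)
  finally show ?thesis .
qed

lemma quadratic_form_diag_normalize:
  assumes "psd_matrix G"
  shows "diag_sqrt_scale G y \<bullet> (diag_normalize G *v diag_sqrt_scale G y) = y \<bullet> (G *v y)"
proof -
  have "sqrt (G$i$i) * y$i * (G$i$j / (sqrt (G$i$i) * sqrt (G$j$j))) * (sqrt (G$j$j) * y$j)
      = y$i * G$i$j * y$j" for i j
  proof (cases "G$i$i = 0 \<or> G$j$j = 0")
    case True
    then have "G$i$j = 0"
      using psd_matrix_zero_diag[OF assms] psd_matrix_symmetric[OF assms] by metis
    then show ?thesis by simp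
  next
    case False
    then show ?thesis by (simp add: field_simps)
  qed
  then show ?thesis
    unfolding inner_matrix_vector_mult_sum diag_normalize_def diag_sqrt_scale_def vec_lambda_beta
    by (intro sum.cong refl)
qed

lemma diag_normalize_quadratic_form_nonneg:
  assumes "psd_matrix G"
  shows "0 \<le> u \<bullet> (diag_normalize G *v u)"
proof -
  have "u \<bullet> (diag_normalize G *v u)
      = (\<chi> i. u$i / sqrt (G$i$i)) \<bullet> (G *v (\<chi> i. u$i / sqrt (G$i$i)))"
    by (simp add: inner_matrix_vector_mult_sum diag_normalize_def divide_inverse
        inverse_mult_distrib mult_ac)
  then show ?thesis using assms by (simp add: psd_matrix_def)
qed

lemma trace_diag_normalize_le:
  fixes G :: "real^'n^'n"
  assumes "psd_matrix G"
  shows "trace (diag_normalize G) \<le> real CARD('n)"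
proof -
  have "diag_normalize G $ i $ i \<le> 1" for i
    using psd_matrix_diag_nonneg[OF assms, of i] by (cases "G$i$i = 0") (simp_all add: diag_normalize_def)
  then show ?thesis
    using sum_mono[of UNIV "\<lambda>i. diag_normalize G $ i $ i" "\<lambda>_. 1"] by (simp add: trace_def)
qed

lemma dim_positive_definite_on_le:
  fixes G :: "real^'n^'n"
  assumes psd: "psd_matrix G" and "0 < \<beta>"
    and pos: "positive_definite_on (G - (1/\<beta>) *\<^sub>R diag_mat G) V"
  shows "real (dim V) \<le> \<beta> * real CARD('n)"
proof -
  let ?\<phi> = "diag_sqrt_scale G" and ?H = "diag_normalize G"
  have V: "subspace V" using pos by (simp add: positive_definite_on_def)
  have K: "y \<bullet> ((G - (1/\<beta>) *\<^sub>R diag_mat G) *v y) = ?\<phi> y \<bullet> (?H *v ?\<phi> y) - (1/\<beta>) * (?\<phi> y \<bullet> ?\<phi> y)"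
    for y
    by (simp add: matrix_vector_mult_diff_rdistrib scaleR_matrix_vector_assoc[symmetric]
        inner_diff_right inner_diag_mat_eq_diag_sqrt_scale[OF psd] quadratic_form_diag_normalize[OF psd])
  have ratio: "(1/\<beta>) * (?\<phi> y \<bullet> ?\<phi> y) < ?\<phi> y \<bullet> (?H *v ?\<phi> y)" if "y \<in> V" "y \<noteq> 0" for y
  proof -
    have "0 < y \<bullet> ((G - (1/\<beta>) *\<^sub>R diag_mat G) *v y)"
      using pos that by (simp add: positive_definite_on_def)
    then show ?thesis using K[of y] by linarith
  qed
  have inj: "inj_on ?\<phi> (span V)"
    unfolding span_eq_iff[THEN iffD2, OF V]
    using ratio linear_0[OF linear_diag_sqrt_scale]
    by (subst linear_inj_on_iff_eq_0[OF linear_diag_sqrt_scale V]) fastforce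
  have "(1/\<beta>) * real (dim (?\<phi> ` V)) \<le> trace ?H"
  proof (rule dim_subspace_le_trace)
    show "subspace (?\<phi> ` V)"
      by (rule linear_subspace_image[OF linear_diag_sqrt_scale V])
    show "(1/\<beta>) * (u \<bullet> u) \<le> u \<bullet> (?H *v u)" if "u \<in> ?\<phi> ` V" for u
      using that ratio linear_0[OF linear_diag_sqrt_scale] by (cases "u = 0") (auto intro: less_imp_le)
  qed (rule diag_normalize_quadratic_form_nonneg[OF psd])
  moreover have "real (dim (?\<phi> ` V)) = real (dim V)"
    using dim_image_eq[OF linear_diag_sqrt_scale inj] by simp
  ultimately have "(1/\<beta>) * real (dim V) \<le> real CARD('n)"
    using trace_diag_normalize_le[OF psd] by simp
  then show ?thesis using \<open>0 < \<beta>\<close> by (simp add: field_simps)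
qed

theorem lemma13:
  fixes G :: "real^'n^'n" and \<beta> :: real
  assumes "psd_matrix G" and "0 < \<beta>" and "\<beta> \<le> 1"
  shows "\<exists>W :: (real^'n) set. subspace W \<and> real (dim W) \<ge> (1 - \<beta>) * real CARD('n) \<and>
           (\<forall>w\<in>W. w \<bullet> (G *v w) \<le> (1 / \<beta>) * (w \<bullet> (diag_mat G *v w)))"
proof -
  define K where "K = G - (1/\<beta>) *\<^sub>R diag_mat G"
  have sym: "transpose K = K"
    using assms(1) unfolding K_def psd_matrix_def
    by (auto simp: vec_eq_iff transpose_def diag_mat_def)
  obtain V W where pos: "positive_definite_on K V" and W: "subspace W"
    and dims: "CARD('n) \<le> dim V + dim W" and nonpos: "\<And>w. w \<in> W \<Longrightarrow> w \<bullet> (K *v w) \<le> 0"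
    by (rule symmetric_matrix_nonpos_subspace[OF sym]) (rule that)
  have "real (dim V) \<le> \<beta> * real CARD('n)"
    using dim_positive_definite_on_le[OF assms(1,2)] pos by (simp add: K_def)
  then have "(1 - \<beta>) * real CARD('n) \<le> real (dim W)"
    using dims by (simp add: algebra_simps)
  moreover have "w \<bullet> (G *v w) \<le> (1 / \<beta>) * (w \<bullet> (diag_mat G *v w))" if "w \<in> W" for w
    using nonpos[OF that] by (simp add: K_def matrix_vector_mult_diff_rdistrib
        scaleR_matrix_vector_assoc[symmetric] inner_diff_right)
  ultimately show ?thesis using W by blast
qed

end
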